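(* Consider a Boolean control network $\mathbf{x}(t+1)=L\ltimes\mathbf{u}(t)\ltimes\mathbf{x}(t)$, $\mathbf{y}(t)=H\mathbf{x}(t)$, with $L\in\mathcal{L}_{N\times NM}$, $H\in\mathcal{L}_{P\times N}$, and a finite-length reference output trajectory $\mathbf{y}_r(t)=\delta_P^{i_t}$, $t\in[1,T]$. Assume this trajectory is trackable from every initial state in $\mathcal{L}_N$. Define $\mathbf{v}(t)=H^\top\delta_P^{i_t}$, $L_{tot}=L_1\vee\cdots\vee L_M$, $\boldsymbol{\alpha}(1)=\mathbf{v}(1)$, $\boldsymbol{\alpha}(t)=\mathbf{v}(t)\odot(L_{tot}\boldsymbol{\alpha}(t-1))$ for $t\in[2,T]$, and $\boldsymbol{\beta}(T)=\boldsymbol{\alpha}(T)$, $\boldsymbol{\beta}(t)=\boldsymbol{\alpha}(t)\odot(L_{tot}^\top\boldsymbol{\beta}(t+1))$ for $t=T-1,\dots,1$. Define $$\mathcal{T}_{xu}(0)=\{(\delta_N^j,\delta_M^i):(L\ltimes\delta_M^i\ltimes\delta_N^j)\odot\boldsymbol{\beta}(1)\neq\mathbf{0}_N\},$$ $$\mathcal{T}_{xu}(t)=\{(\delta_N^j,\delta_M^i):[\boldsymbol{\beta}(t)]_j\neq0\text{ and }(L\ltimes\delta_M^i\ltimes\delta_N^j)\odot\boldsymbol{\beta}(t+1)\neq\mathbf{0}_N\},\quad t\in[1,T-1],$$ and $\mathcal{T}_u(t,\mathbf{x})=\{\mathbf{u}\in\mathcal{L}_M:(\mathbf{x},\mathbf{u})\in\mathcal{T}_{xu}(t)\}$.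 Then for every initial state $\mathbf{x}_0\in\mathcal{L}_N$, an input sequence $\{\mathbf{u}(t)\}_{t=0}^{T-1}$ ensuring output tracking (i.e. $H\mathbf{x}_t=\mathbf{y}_r(t)$ for all $t\in[1,T]$) is obtained by the recursive procedure: for $t=0,1,\dots,T-1$, choose $\mathbf{u}_t\in\mathcal{T}_u(t,\mathbf{x}_t)$ and set $\mathbf{x}_{t+1}=L\ltimes\mathbf{u}_t\ltimes\mathbf{x}_t$, with $\mathbf{u}(t)=\mathbf{u}_t$.
   Context: $\delta_k^i$ is the $i$-th canonical vector of $\mathbb{R}^k$; $\mathcal{L}_k$ is the set of canonical vectors of $\mathbb{R}^k$; $\mathcal{L}_{k\times q}$ the set of $k\times q$ matrices whose columns lie in $\mathcal{L}_k$. $N=2^n$, $M=2^m$, $P=2^p$. $L=[L_1|\cdots|L_M]$ with $L_i\in\mathcal{L}_{N\times N}$, and $L\ltimes\delta_M^i\ltimes\mathbf{x}=L_i\mathbf{x}$. $\vee$ is entrywise Boolean OR, $\odot$ is the entrywise (Hadamard) product, matrix–vector products are ordinary (only the zero/nonzero pattern of the vectors matters), $[\mathbf{w}]_j$ is the $j$-th entry, $\mathbf{0}_N$ the zero vector. A trajectory is trackable from $\mathbf{x}_0$ if there exist inputs $\mathbf{u}(0),\dots,\mathbf{u}(T-1)\in\mathcal{L}_M$ such that the resulting states $\mathbf{x}(t+1)=L\ltimes\mathbf{u}(t)\ltimes\mathbf{x}(t)$, $\mathbf{x}(0)=\mathbf{x}_0$, satisfy $H\mathbf{x}(t)=\mathbf{y}_r(t)$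 for all $t\in[1,T]$. *)

theory Defs
  imports Main
begin

text \<open>Encoding (0-based indices): a canonical vector delta_k^(j+1) is represented by
  its index j < k. A logical matrix L = [L_1|...|L_M] in L_{N x NM} is represented
  by the function L :: nat => nat => nat with L i j = index of L |x delta_M^(i+1) |x delta_N^(j+1).
  H in L_{P x N} is represented by h :: nat => nat, H delta_N^(j+1) = delta_P^(h j + 1).
  The reference output y_r(t) = delta_P^(i_t) is represented by yr t (an index < P).
  Boolean vectors in R^N (only their zero/nonzero pattern matters) are represented by
  predicates nat => bool supported on {0..<N}.\<close>

primrec traj :: "(nat \<Rightarrow> nat \<Rightarrow> nat) \<Rightarrow> nat \<Rightarrow> (nat \<Rightarrow> nat) \<Rightarrow> nat \<Rightarrow> nat" where
  "traj L x0 u 0 = x0"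
| "traj L x0 u (Suc t) = L (u t) (traj L x0 u t)"

definition trackable ::
  "nat \<Rightarrow> nat \<Rightarrow> (nat \<Rightarrow> nat \<Rightarrow> nat) \<Rightarrow> (nat \<Rightarrow> nat) \<Rightarrow> (nat \<Rightarrow> nat) \<Rightarrow> nat \<Rightarrow> nat \<Rightarrow> bool" where
  "trackable N M L h yr T x0 \<longleftrightarrow>
     (\<exists>u. (\<forall>t<T. u t < M) \<and> (\<forall>t\<in>{1..T}. h (traj L x0 u t) = yr t))"

text \<open>v(t) = H^T delta_P^(i_t): entry j is nonzero iff column j of H equals y_r(t).\<close>
definition vvec :: "nat \<Rightarrow> (nat \<Rightarrow> nat) \<Rightarrow> (nat \<Rightarrow> nat) \<Rightarrow> nat \<Rightarrow> nat \<Rightarrow> bool" where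
  "vvec N h yr t j \<longleftrightarrow> j < N \<and> h j = yr t"

definition Ltot_mul :: "nat \<Rightarrow> nat \<Rightarrow> (nat \<Rightarrow> nat \<Rightarrow> nat) \<Rightarrow> (nat \<Rightarrow> bool) \<Rightarrow> nat \<Rightarrow> bool" where
  "Ltot_mul N M L w k \<longleftrightarrow> k < N \<and> (\<exists>i<M. \<exists>j<N. L i j = k \<and> w j)"

definition LtotT_mul :: "nat \<Rightarrow> nat \<Rightarrow> (nat \<Rightarrow> nat \<Rightarrow> nat) \<Rightarrow> (nat \<Rightarrow> bool) \<Rightarrow> nat \<Rightarrow> bool" where
  "LtotT_mul N M L w j \<longleftrightarrow> j < N \<and> (\<exists>i<M. w (L i j))"

text \<open>alpha(1) = v(1), alpha(t) = v(t) (Hadamard) L_tot alpha(t-1); alpha 0 is unused.\<close>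
fun alpha :: "nat \<Rightarrow> nat \<Rightarrow> (nat \<Rightarrow> nat \<Rightarrow> nat) \<Rightarrow> (nat \<Rightarrow> nat) \<Rightarrow> (nat \<Rightarrow> nat) \<Rightarrow> nat \<Rightarrow> nat \<Rightarrow> bool" where
  "alpha N M L h yr 0 = (\<lambda>j. False)"
| "alpha N M L h yr (Suc 0) = vvec N h yr 1"
| "alpha N M L h yr (Suc (Suc t)) =
     (\<lambda>j. vvec N h yr (Suc (Suc t)) j \<and> Ltot_mul N M L (alpha N M L h yr (Suc t)) j)"

text \<open>beta_aux k = beta(T - k): beta(T) = alpha(T), beta(t) = alpha(t) (Hadamard) L_tot^T beta(t+1).\<close>
fun beta_aux :: "nat \<Rightarrow> nat \<Rightarrow> (nat \<Rightarrow> nat \<Rightarrow> nat) \<Rightarrow> (nat \<Rightarrow> nat) \<Rightarrow> (nat \<Rightarrow> nat) \<Rightarrow> nat \<Rightarrow> nat \<Rightarrow> nat \<Rightarrow> bool" where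
  "beta_aux N M L h yr T 0 = alpha N M L h yr T"
| "beta_aux N M L h yr T (Suc k) =
     (\<lambda>j. alpha N M L h yr (T - Suc k) j \<and> LtotT_mul N M L (beta_aux N M L h yr T k) j)"

definition beta :: "nat \<Rightarrow> nat \<Rightarrow> (nat \<Rightarrow> nat \<Rightarrow> nat) \<Rightarrow> (nat \<Rightarrow> nat) \<Rightarrow> (nat \<Rightarrow> nat) \<Rightarrow> nat \<Rightarrow> nat \<Rightarrow> nat \<Rightarrow> bool" where
  "beta N M L h yr T t = beta_aux N M L h yr T (T - t)"

text \<open>T_xu(t) as a set of pairs (state index j, input index i).
  (L |x delta_M^i |x delta_N^j) (Hadamard) beta(t+1) \<noteq> 0 iff beta(t+1) has a nonzero
  entry at L i j.\<close>
definition Txu :: "nat \<Rightarrow> nat \<Rightarrow> (nat \<Rightarrow> nat \<Rightarrow> nat) \<Rightarrow> (nat \<Rightarrow> nat) \<Rightarrow> (nat \<Rightarrow> nat) \<Rightarrow> nat \<Rightarrow> nat \<Rightarrow> (nat \<times> nat) set" where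
  "Txu N M L h yr T t =
     (if t = 0 then {(j, i). j < N \<and> i < M \<and> beta N M L h yr T 1 (L i j)}
      else {(j, i). j < N \<and> i < M \<and> beta N M L h yr T t j \<and> beta N M L h yr T (Suc t) (L i j)})"

definition Tu :: "nat \<Rightarrow> nat \<Rightarrow> (nat \<Rightarrow> nat \<Rightarrow> nat) \<Rightarrow> (nat \<Rightarrow> nat) \<Rightarrow> (nat \<Rightarrow> nat) \<Rightarrow> nat \<Rightarrow> nat \<Rightarrow> nat \<Rightarrow> nat set" where
  "Tu N M L h yr T t x = {i. i < M \<and> (x, i) \<in> Txu N M L h yr T t}"

end

theory Submission
  imports Defs
begin

text \<open>Every trajectory that tracks the reference runs inside the supports of beta, so a
  state x0 admitting a tracking input has T_u(0, x0) nonempty. Conversely, every input in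
  T_u(t, x) leads into the support of beta(t+1); there the factor L_tot^T beta(t+2) of
  beta(t+1) provides a next admissible input, and beta \<le> alpha \<le> v forces the correct
  output.\<close>

lemma alpha_Suc:
  "1 \<le> t \<Longrightarrow> alpha N M L h yr (Suc t) x
     \<longleftrightarrow> vvec N h yr (Suc t) x \<and> Ltot_mul N M L (alpha N M L h yr t) x"
  by (cases t) auto

lemma alpha_imp_vvec: "1 \<le> t \<Longrightarrow> alpha N M L h yr t x \<Longrightarrow> vvec N h yr t x"
  by (cases "(N, M, L, h, yr, t)" rule: alpha.cases) auto

lemma beta_last: "beta N M L h yr T T = alpha N M L h yr T"
  by (simp add: beta_def)

lemma beta_Suc:
  assumes "t < T"
  shows "beta N M L h yr T t x
           \<longleftrightarrow> alpha N M L h yr t x \<and> LtotT_mul N M L (beta N M L h yr T (Suc t)) x"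
proof -
  have "T - t = Suc (T - Suc t)" and "T - Suc (T - Suc t) = t"
    using assms by simp_all
  then show ?thesis by (simp add: beta_def)
qed

lemma beta_imp_alpha: "t \<le> T \<Longrightarrow> beta N M L h yr T t x \<Longrightarrow> alpha N M L h yr t x"
  by (cases "t = T") (auto simp: beta_last beta_Suc)

lemma beta_imp_output: "1 \<le> t \<Longrightarrow> t \<le> T \<Longrightarrow> beta N M L h yr T t x \<Longrightarrow> h x = yr t"
  using beta_imp_alpha alpha_imp_vvec by (fastforce simp: vvec_def)

lemma traj_less:
  assumes "\<forall>i<M. \<forall>j<N. L i j < N" and "x0 < N" and "\<forall>t<T. u t < M"
  shows "s \<le> T \<Longrightarrow> traj L x0 u s < N"
  using assms by (induction s) auto

lemma tracking_traj_in_alpha: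
  assumes L_logical: "\<forall>i<M. \<forall>j<N. L i j < N" and x0: "x0 < N"
    and u: "\<forall>t<T. u t < M" and tracks: "\<forall>t\<in>{1..T}. h (traj L x0 u t) = yr t"
    and "1 \<le> s" and sT: "s \<le> T"
  shows "alpha N M L h yr s (traj L x0 u s)"
  using \<open>1 \<le> s\<close>
proof (induction s rule: dec_induct)
  case base
  have "1 \<in> {1..T}"
    using \<open>1 \<le> s\<close> sT by simp
  then have "traj L x0 u 1 < N" "h (traj L x0 u 1) = yr 1"
    using traj_less[OF L_logical x0 u, of 1] tracks by (simp, blast)
  then show ?case by (simp add: vvec_def)
next
  case (step k)
  have "Suc k \<in> {1..T}" "k < T"
    using step.hyps sT by simp_all
  then have "traj L x0 u k < N" "traj L x0 u (Suc k) < N" "u k < M"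
    and "h (traj L x0 u (Suc k)) = yr (Suc k)"
    using traj_less[OF L_logical x0 u] u tracks by (simp_all del: traj.simps)
  then show ?case
    using step by (auto simp: alpha_Suc vvec_def Ltot_mul_def)
qed

lemma tracking_traj_in_beta:
  assumes L_logical: "\<forall>i<M. \<forall>j<N. L i j < N" and x0: "x0 < N"
    and u: "\<forall>t<T. u t < M" and tracks: "\<forall>t\<in>{1..T}. h (traj L x0 u t) = yr t"
    and "1 \<le> s" and "s \<le> T"
  shows "beta N M L h yr T s (traj L x0 u s)"
  using \<open>s \<le> T\<close> \<open>1 \<le> s\<close>
proof (induction s rule: inc_induct)
  case base
  then show ?case
    using tracking_traj_in_alpha[OF assms(1-4)] by (simp add: beta_last)
next
  case (step k)
  have "traj L x0 u k < N" "u k < M"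
    using traj_less[OF L_logical x0 u] u step.hyps by auto
  then have "LtotT_mul N M L (beta N M L h yr T (Suc k)) (traj L x0 u k)"
    using step.IH step.prems by (auto simp: LtotT_mul_def)
  then show ?case
    using step tracking_traj_in_alpha[OF assms(1-4)] by (simp add: beta_Suc)
qed

lemma Tu_imp_beta_Suc: "i \<in> Tu N M L h yr T t x \<Longrightarrow> beta N M L h yr T (Suc t) (L i x)"
  by (auto simp: Tu_def Txu_def split: if_splits)

lemma Tu_0_nonempty:
  assumes "\<forall>i<M. \<forall>j<N. L i j < N" and "x0 < N" and "1 \<le> T"
    and "trackable N M L h yr T x0"
  shows "Tu N M L h yr T 0 x0 \<noteq> {}"
proof -
  obtain u where u: "\<forall>t<T. u t < M" "\<forall>t\<in>{1..T}. h (traj L x0 u t) = yr t"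
    using assms(4) unfolding trackable_def by blast
  have "beta N M L h yr T 1 (L (u 0) x0)"
    using tracking_traj_in_beta[OF assms(1,2) u, of 1] assms(3) by simp
  then have "u 0 \<in> Tu N M L h yr T 0 x0"
    using u(1) assms(2,3) by (simp add: Tu_def Txu_def)
  then show ?thesis by blast
qed

lemma Tu_nonempty_if_beta:
  assumes "1 \<le> t" and "t < T" and "beta N M L h yr T t x"
  shows "Tu N M L h yr T t x \<noteq> {}"
proof -
  have "LtotT_mul N M L (beta N M L h yr T (Suc t)) x"
    using assms beta_Suc by blast
  then obtain i where "i < M" "x < N" "beta N M L h yr T (Suc t) (L i x)"
    unfolding LtotT_mul_def by blast
  then have "i \<in> Tu N M L h yr T t x"
    using assms by (simp add: Tu_def Txu_def)
  then show ?thesis by blast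
qed

theorem corollary1:
  fixes n m p T :: nat
    and L :: "nat \<Rightarrow> nat \<Rightarrow> nat" and h :: "nat \<Rightarrow> nat" and yr :: "nat \<Rightarrow> nat"
  defines "N \<equiv> 2 ^ n" and "M \<equiv> 2 ^ m" and "P \<equiv> 2 ^ p"
  assumes L_logical: "\<forall>i<M. \<forall>j<N. L i j < N"
    and H_logical: "\<forall>j<N. h j < P"
    and yr_canonical: "\<forall>t\<in>{1..T}. yr t < P"
    and T_pos: "1 \<le> T"
    and track_all: "\<forall>x0<N. trackable N M L h yr T x0"
  shows "\<forall>x0<N. \<forall>u :: nat \<Rightarrow> nat.
           (\<forall>t<T. (\<forall>s<t. u s \<in> Tu N M L h yr T s (traj L x0 u s))
                    \<longrightarrow> Tu N M L h yr T t (traj L x0 u t) \<noteq> {})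
         \<and> ((\<forall>t<T. u t \<in> Tu N M L h yr T t (traj L x0 u t))
              \<longrightarrow> (\<forall>t\<in>{1..T}. h (traj L x0 u t) = yr t))"
proof (intro allI impI conjI ballI)
  fix x0 u t
  assume x0: "x0 < N" and t: "t < T"
    and chosen: "\<forall>s<t. u s \<in> Tu N M L h yr T s (traj L x0 u s)"
  show "Tu N M L h yr T t (traj L x0 u t) \<noteq> {}"
  proof (cases t)
    case 0
    then show ?thesis
      using Tu_0_nonempty[OF L_logical x0 T_pos] track_all x0 by simp
  next
    case (Suc s)
    then have "beta N M L h yr T t (traj L x0 u t)"
      using Tu_imp_beta_Suc chosen by simp
    then show ?thesis
      using Tu_nonempty_if_beta Suc t by simp
  qed
next
  fix x0 u t
  assume chosen: "\<forall>t<T. u t \<in> Tu N M L h yr T t (traj L x0 u t)" and t: "t \<in> {1..T}"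
  then obtain s where s: "t = Suc s" "s < T"
    by (cases t) auto
  then have "beta N M L h yr T t (traj L x0 u t)"
    using Tu_imp_beta_Suc chosen by simp
  then show "h (traj L x0 u t) = yr t"
    using beta_imp_output t by auto
qed

end
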